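(* For $n\ge1$ and $l\in\{1,\dots,n\}$ let $X_{n,l}$ be the depth of the node containing $l$ in the random binary search tree built from a uniformly random permutation of $\{1,\dots,n\}$. Let $(l_n)_{n\in\mathbb{N}}$ be any sequence of integers with $1\le l_n\le n$ for all $n$. Then, as $n\to\infty$, $$\frac{X_{n,l_n}-E X_{n,l_n}}{\sqrt{E X_{n,l_n}}}\ \xrightarrow{\text{distr}}\ Z,\qquad Z\sim N(0,1).$$
   Context: Random binary search tree: given a permutation $(\pi(1),\dots,\pi(n))$ of $\{1,\dots,n\}$, the keys are inserted in order $\pi(1),\pi(2),\dots$; $\pi(1)$ is the root, and each subsequent key moves left if smaller and right if larger than the current node's key, starting at the root, until it reaches an empty position where it is placed. The permutation is uniform over all $n!$ permutations. The depth of a node is its number of edges from the root. $\xrightarrow{\text{distr}}$ denotes convergence in distribution and $N(0,1)$ the standard normal distribution. *)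

theory Defs
  imports "HOL-Probability.Probability" "HOL-Combinatorics.Multiset_Permutations"
begin

datatype bst = Leaf | Node bst nat bst

fun bst_insert :: "nat \<Rightarrow> bst \<Rightarrow> bst" where
  "bst_insert x Leaf = Node Leaf x Leaf"
| "bst_insert x (Node l a r) =
     (if x < a then Node (bst_insert x l) a r
      else if a < x then Node l a (bst_insert x r)
      else Node l a r)"

definition bst_of_list :: "nat list \<Rightarrow> bst" where
  "bst_of_list xs = fold bst_insert xs Leaf"

text \<open>Depth (number of edges from the root) of the node containing key x
  (only meaningful when x occurs in the tree).\<close>
fun bst_depth :: "nat \<Rightarrow> bst \<Rightarrow> nat" where
  "bst_depth x Leaf = 0"
| "bst_depth x (Node l a r) =
     (if x = a then 0 else if x < a then Suc (bst_depth x l) else Suc (bst_depth x r))"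

text \<open>Uniform random permutation of {1..n}, written as the insertion sequence.\<close>
definition rand_perm :: "nat \<Rightarrow> nat list pmf" where
  "rand_perm n = pmf_of_set (permutations_of_set {1..n})"

definition X_depth :: "nat \<Rightarrow> nat list \<Rightarrow> real" where
  "X_depth l \<pi> = real (bst_depth l (bst_of_list \<pi>))"

definition E_depth :: "nat \<Rightarrow> nat \<Rightarrow> real" where
  "E_depth n l = measure_pmf.expectation (rand_perm n) (X_depth l)"

end

theory Submission
  imports Defs "HOL-Real_Asymp.Real_Asymp"
begin

text \<open>
  The ancestors of a key l in the tree built from \<pi> are exactly the left-to-right maxima of \<pi>
  among the keys \<open>\<le> l\<close> and the left-to-right minima among the keys \<open>\<ge> l\<close>, with l counted in
  both. Removing l from the two blocks gives a sum S of record counts over the disjoint blocks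
  \<open>{1..l-1}\<close> and \<open>{l+1..n}\<close> with \<open>X \<le> S\<close> and \<open>E S - E X \<le> 2\<close>. By Renyi's theorem the
  records of disjoint blocks of a uniform permutation are independent, the k-th smallest element
  of a block being a record with probability 1/k, so the generating function of S is a product of
  factors \<open>1 + (z - 1)/k\<close>. On the unit circle it is within \<open>O(|z - 1|^2)\<close> of the Poisson
  generating function \<open>exp ((z - 1) (H (l - 1) + H (n - l)))\<close>. As
  \<open>E X = H l + H (n + 1 - l) - 2 \<ge> ln n - 2\<close>, the characteristic function of the normalised
  depth behaves like that of a normalised Poisson variable with diverging mean, which tends to
  \<open>exp (-t^2/2)\<close>; Levy's continuity theorem concludes.
\<close>

section \<open>Depth as a sum of record counts\<close>

text \<open>\<^term>\<open>records R B xs\<close> counts the elements of \<^term>\<open>xs\<close> in \<^term>\<open>B\<close> that are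
  \<^term>\<open>R\<close>-above every earlier element of \<^term>\<open>xs\<close> in \<^term>\<open>B\<close>.\<close>

fun records :: "('a \<Rightarrow> 'a \<Rightarrow> bool) \<Rightarrow> 'a set \<Rightarrow> 'a list \<Rightarrow> nat" where
  "records R B [] = 0"
| "records R B (x # xs) =
     (if x \<in> B then Suc (records R {y \<in> B. R x y} xs) else records R B xs)"

lemma fold_bst_insert_Node:
  "fold bst_insert xs (Node L x R) =
     Node (fold bst_insert (filter (\<lambda>y. y < x) xs) L) x (fold bst_insert (filter (\<lambda>y. x < y) xs) R)"
  by (induction xs arbitrary: L R) auto

lemma bst_of_list_Cons:
  "bst_of_list (x # xs) =
     Node (bst_of_list (filter (\<lambda>y. y < x) xs)) x (bst_of_list (filter (\<lambda>y. x < y) xs))"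
  by (simp add: bst_of_list_def fold_bst_insert_Node)

lemma records_filter: "records R B (filter P xs) = records R {y \<in> B. P y} xs"
  by (induction xs arbitrary: B) (auto intro!: arg_cong[where f = "\<lambda>S. records R S _"])

lemma records_empty [simp]: "records R {} xs = 0"
  by (induction xs) auto

lemma records_cong:
  "B \<inter> set xs = B' \<inter> set xs \<Longrightarrow> records R B xs = records R B' xs"
proof (induction xs arbitrary: B B')
  case (Cons x xs)
  then have "x \<in> B \<longleftrightarrow> x \<in> B'" by auto
  moreover have "{y \<in> B. R x y} \<inter> set xs = {y \<in> B'. R x y} \<inter> set xs"
    using Cons.prems by auto
  ultimately show ?case using Cons.prems by (auto intro: Cons.IH)
qed simp

lemma bst_depth_eq_records:
  "l \<in> set xs \<Longrightarrow> bst_depth l (bst_of_list xs) + 2 = records (<) {..l} xs + records (>) {l..} xs"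
proof (induction xs rule: length_induct)
  case (1 xs)
  then obtain x ys where xs: "xs = x # ys" by (cases xs) auto
  consider "x = l" | "x < l" | "l < x" by linarith
  then show ?case
  proof cases
    case 1
    have "{y. y \<le> l \<and> l < y} = {}" "{y. l \<le> y \<and> y < l} = {}" by auto
    with 1 show ?thesis by (simp add: xs bst_of_list_Cons del: Collect_empty_eq)
  next
    case 2
    then have "l \<in> set (filter (\<lambda>y. x < y) ys)" using "1.prems" xs by auto
    from "1.IH"[rule_format, OF _ this] have
      "bst_depth l (bst_of_list (filter (\<lambda>y. x < y) ys)) + 2
        = records (<) {y \<in> {..l}. x < y} ys + records (>) {y \<in> {l..}. x < y} ys"
      by (simp add: xs records_filter le_imp_less_Suc)
    moreover have "{y \<in> {l..}. x < y} = {l..}" using 2 by auto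
    ultimately show ?thesis using 2 by (simp add: xs bst_of_list_Cons)
  next
    case 3
    then have "l \<in> set (filter (\<lambda>y. y < x) ys)" using "1.prems" xs by auto
    from "1.IH"[rule_format, OF _ this] have
      "bst_depth l (bst_of_list (filter (\<lambda>y. y < x) ys)) + 2
        = records (<) {y \<in> {..l}. y < x} ys + records (>) {y \<in> {l..}. y < x} ys"
      by (simp add: xs records_filter le_imp_less_Suc)
    moreover have "{y \<in> {..l}. y < x} = {..l}" using 3 by auto
    ultimately show ?thesis using 3 by (simp add: xs bst_of_list_Cons)
  qed
qed

section \<open>Records of a uniform random permutation\<close>

lemma sum_permutations_of_set_Cons:
  assumes "finite A" "A \<noteq> {}"
  shows "(\<Sum>\<pi>\<in>permutations_of_set A. f \<pi>) = (\<Sum>x\<in>A. \<Sum>\<sigma>\<in>permutations_of_set (A - {x}). f (x # \<sigma>))"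
proof -
  have "(\<Sum>\<pi>\<in>permutations_of_set A. f \<pi>)
      = (\<Sum>x\<in>A. \<Sum>\<pi>\<in>(#) x ` permutations_of_set (A - {x}). f \<pi>)"
    unfolding permutations_of_set_nonempty[OF assms(2)]
    by (rule sum.UNION_disjoint) (use assms in auto)
  also have "\<dots> = (\<Sum>x\<in>A. \<Sum>\<sigma>\<in>permutations_of_set (A - {x}). f (x # \<sigma>))"
    by (simp add: sum.reindex)
  finally show ?thesis .
qed

text \<open>A locale rather than the class \<^class>\<open>linorder\<close>, so that the results apply to both
  \<^term>\<open>(<)\<close> and \<^term>\<open>(>)\<close> on the same type.\<close>

locale strict_total_order =
  fixes R :: "'a \<Rightarrow> 'a \<Rightarrow> bool"
  assumes irrefl: "\<not> R x x"
    and trans: "R x y \<Longrightarrow> R y z \<Longrightarrow> R x z"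
    and total: "x \<noteq> y \<Longrightarrow> R x y \<or> R y x"
begin

lemma asym: "R x y \<Longrightarrow> \<not> R y x"
  using irrefl trans by blast

lemma bij_betw_rank:
  assumes "finite B"
  shows "bij_betw (\<lambda>x. card {y \<in> B. R x y}) B {..<card B}"
proof -
  let ?rank = "\<lambda>x. card {y \<in> B. R x y}"
  have rank_less: "?rank x < ?rank y" if "x \<in> B" "y \<in> B" "R y x" for x y
  proof -
    have "{z \<in> B. R x z} \<subset> {z \<in> B. R y z}"
      using that irrefl trans by blast
    with assms show ?thesis by (intro psubset_card_mono) auto
  qed
  have "inj_on ?rank B"
    by (rule inj_onI) (metis rank_less total less_irrefl)
  moreover have "?rank ` B \<subseteq> {..<card B}"
    using assms irrefl by (auto intro!: psubset_card_mono)
  ultimately have "?rank ` B = {..<card B}"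
    by (intro card_subset_eq) (auto simp: card_image)
  with \<open>inj_on ?rank B\<close> show ?thesis
    unfolding bij_betw_def by blast
qed

lemma sum_rank:
  "finite B \<Longrightarrow> (\<Sum>x\<in>B. g (card {y \<in> B. R x y})) = (\<Sum>j<card B. g j)"
  using sum.reindex_bij_betw[OF bij_betw_rank] by blast

lemma records_insert_max_le:
  "(\<And>b. b \<in> B \<Longrightarrow> R b m) \<Longrightarrow> records R (insert m B) xs \<le> Suc (records R B xs)"
proof (induction xs arbitrary: B)
  case (Cons x xs)
  consider "x = m" | "x \<noteq> m" "x \<in> B" | "x \<noteq> m" "x \<notin> B" by blast
  then show ?case
  proof cases
    case 1
    then have "{y \<in> insert m B. R x y} = {}"
      using Cons.prems irrefl asym by blast
    with 1 have "records R (insert m B) (x # xs) = 1"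
      by (simp only: records.simps insertI1 if_True records_empty)
    then show ?thesis by simp
  next
    case 2
    then have "{y \<in> insert m B. R x y} = insert m {y \<in> B. R x y}"
      using Cons.prems by auto
    with 2 Cons.IH[of "{y \<in> B. R x y}"] Cons.prems show ?thesis by simp
  next
    case 3
    with Cons show ?thesis by simp
  qed
qed simp

lemma sum_records:
  "finite A \<Longrightarrow>
     (\<Sum>\<pi>\<in>permutations_of_set A. real (records R B \<pi>)) = fact (card A) * harm (card (B \<inter> A))"
proof (induction "card A" arbitrary: A B)
  case 0
  then show ?case by (simp add: harm_def)
next
  case (Suc m)
  then have "A \<noteq> {}" by auto
  let ?b = "card (B \<inter> A)"
  let ?f = "\<lambda>x. \<Sum>\<sigma>\<in>permutations_of_set (A - {x}). real (records R B (x # \<sigma>))"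
  have card_remove: "card (A - {x}) = m" if "x \<in> A" for x
    using Suc that by simp
  have in_B: "?f x = fact m * (1 + harm (card {y \<in> B \<inter> A. R x y}))" if "x \<in> B \<inter> A" for x
  proof -
    have "{y \<in> B. R x y} \<inter> (A - {x}) = {y \<in> B \<inter> A. R x y}"
      using irrefl by blast
    then show ?thesis
      using that Suc.hyps(1)[of "A - {x}" "{y \<in> B. R x y}"] card_remove[of x] Suc.prems
      by (simp add: sum.distrib algebra_simps)
  qed
  have not_in_B: "?f x = fact m * harm ?b" if "x \<in> A - B" for x
  proof -
    have "B \<inter> (A - {x}) = B \<inter> A" using that by blast
    then show ?thesis
      using that Suc.hyps(1)[of "A - {x}" B] card_remove[of x] Suc.prems by simp
  qed
  have b_le: "?b \<le> Suc m"
    using card_mono[OF Suc.prems, of "B \<inter> A"] Suc.hyps(2) by simp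
  have sum_harm: "(\<Sum>j<k. 1 + harm j :: real) = k * harm k" for k
    by (induction k) (simp_all add: harm_Suc sum.distrib field_simps)
  have "(\<Sum>\<pi>\<in>permutations_of_set A. real (records R B \<pi>)) = sum ?f A"
    by (rule sum_permutations_of_set_Cons[OF Suc.prems \<open>A \<noteq> {}\<close>])
  also have "\<dots> = sum ?f (B \<inter> A) + sum ?f (A - B)"
    by (subst Int_commute) (rule sum.Int_Diff[OF Suc.prems])
  also have "sum ?f (B \<inter> A) = (\<Sum>x\<in>B \<inter> A. fact m * (1 + harm (card {y \<in> B \<inter> A. R x y})))"
    using in_B by (rule sum.cong[OF refl])
  also have "\<dots> = fact m * (\<Sum>j<?b. 1 + harm j)"
    unfolding sum_distrib_left[symmetric] using Suc.prems by (subst sum_rank) auto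
  also have "sum ?f (A - B) = real (card (A - B)) * fact m * harm ?b"
    using not_in_B by simp
  also have "card (A - B) = Suc m - ?b"
    using card_Int_Diff[OF Suc.prems, of B] Suc.hyps(2) by (simp add: Int_commute)
  finally show ?case
    unfolding Suc.hyps(2)[symmetric] sum_harm using b_le by (simp add: of_nat_diff algebra_simps)
qed

end

lemma strict_total_order_less: "strict_total_order ((<) :: 'a :: linorder \<Rightarrow> 'a \<Rightarrow> bool)"
  by unfold_locales auto

lemma strict_total_order_greater: "strict_total_order ((>) :: 'a :: linorder \<Rightarrow> 'a \<Rightarrow> bool)"
  by unfold_locales auto

text \<open>The generating function of the number of records of a uniform random permutation of
  \<^term>\<open>m\<close> elements.\<close>

definition record_pgf :: "nat \<Rightarrow> 'a \<Rightarrow> 'a :: field_char_0" where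
  "record_pgf m z = (\<Prod>k<m. 1 + (z - 1) / of_nat (Suc k))"

lemma record_pgf_Suc:
  "of_nat (Suc m) * record_pgf (Suc m) z = (z + of_nat m) * record_pgf m z"
proof -
  have "of_nat (Suc m) * (1 + (z - 1) / of_nat (Suc m)) = z + of_nat m"
    by (simp add: field_simps del: of_nat_Suc) (simp add: algebra_simps)
  then show ?thesis
    by (simp add: record_pgf_def mult.assoc mult.left_commute[of "of_nat (Suc m)"] del: of_nat_Suc)
qed

lemma sum_record_pgf: "z * (\<Sum>j<b. record_pgf j z) = of_nat b * record_pgf b z"
  by (induction b) (simp_all add: record_pgf_Suc algebra_simps del: of_nat_Suc)

lemma (in strict_total_order) sum_pow_records_Cons:
  fixes z :: "'b :: field_char_0"
  assumes "finite B" "B \<subseteq> A" "C \<subseteq> A" "B \<inter> C = {}"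
    and tail: "\<And>x B'. x \<in> A \<Longrightarrow> B' \<subseteq> A - {x} \<Longrightarrow> C \<subseteq> A - {x} \<Longrightarrow> B' \<inter> C = {} \<Longrightarrow>
                 (\<Sum>\<sigma>\<in>permutations_of_set (A - {x}). z ^ (records R B' \<sigma> + records R' C \<sigma>))
                   = c * record_pgf (card B') z"
  shows "(\<Sum>x\<in>B. \<Sum>\<sigma>\<in>permutations_of_set (A - {x}). z ^ (records R B (x # \<sigma>) + records R' C (x # \<sigma>)))
           = c * (of_nat (card B) * record_pgf (card B) z)"
proof -
  have "(\<Sum>\<sigma>\<in>permutations_of_set (A - {x}). z ^ (records R B (x # \<sigma>) + records R' C (x # \<sigma>)))
      = c * (z * record_pgf (card {y \<in> B. R x y}) z)" if "x \<in> B" for x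
  proof -
    have "x \<in> A" "x \<notin> C" "{y \<in> B. R x y} \<subseteq> A - {x}" "C \<subseteq> A - {x}" "{y \<in> B. R x y} \<inter> C = {}"
      using that assms(2-4) irrefl by auto
    with tail \<open>x \<in> B\<close> show ?thesis
      by (simp add: mult.left_commute flip: sum_distrib_left)
  qed
  then have "(\<Sum>x\<in>B. \<Sum>\<sigma>\<in>permutations_of_set (A - {x}). z ^ (records R B (x # \<sigma>) + records R' C (x # \<sigma>)))
      = (\<Sum>x\<in>B. c * (z * record_pgf (card {y \<in> B. R x y}) z))"
    by (rule sum.cong[OF refl])
  also have "\<dots> = c * (z * (\<Sum>j<card B. record_pgf j z))"
    using sum_rank[OF \<open>finite B\<close>, of "\<lambda>j. c * (z * record_pgf j z)"] by (simp flip: sum_distrib_left)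
  finally show ?thesis
    by (simp only: sum_record_pgf)
qed

lemma sum_pow_records:
  fixes z :: "'a :: field_char_0"
  assumes R1: "strict_total_order R1" and R2: "strict_total_order R2"
  shows "finite A \<Longrightarrow> B \<subseteq> A \<Longrightarrow> C \<subseteq> A \<Longrightarrow> B \<inter> C = {} \<Longrightarrow>
           (\<Sum>\<pi>\<in>permutations_of_set A. z ^ (records R1 B \<pi> + records R2 C \<pi>))
             = fact (card A) * record_pgf (card B) z * record_pgf (card C) z"
proof (induction "card A" arbitrary: A B C)
  case 0
  then show ?case by (simp add: record_pgf_def)
next
  case (Suc m)
  let ?f = "\<lambda>x. \<Sum>\<sigma>\<in>permutations_of_set (A - {x}). z ^ (records R1 B (x # \<sigma>) + records R2 C (x # \<sigma>))"
  let ?K = "fact m * record_pgf (card B) z * record_pgf (card C) z :: 'a"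
  have fin: "finite B" "finite C"
    using Suc.prems finite_subset by blast+
  have card_BC: "card B + card C \<le> card A"
    using Suc.prems card_mono[of A "B \<union> C"] by (simp add: card_Un_disjoint fin)
  have IH: "(\<Sum>\<sigma>\<in>permutations_of_set (A - {x}). z ^ (records R1 B' \<sigma> + records R2 C' \<sigma>))
      = fact m * record_pgf (card B') z * record_pgf (card C') z"
    if "x \<in> A" "B' \<subseteq> A - {x}" "C' \<subseteq> A - {x}" "B' \<inter> C' = {}" for x B' C'
  proof -
    have "card (A - {x}) = m"
      using Suc.hyps(2) Suc.prems(1) that(1) by simp
    with Suc.hyps(1)[of "A - {x}" B' C'] Suc.prems(1) that show ?thesis
      by simp
  qed
  have "(\<Sum>\<pi>\<in>permutations_of_set A. z ^ (records R1 B \<pi> + records R2 C \<pi>)) = sum ?f A"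
    using Suc.hyps(2) by (intro sum_permutations_of_set_Cons Suc.prems) auto
  also have "\<dots> = sum ?f B + sum ?f C + sum ?f (A - (B \<union> C))"
    using Suc.prems fin by (simp add: sum.subset_diff[of "B \<union> C" A] sum.union_disjoint)
  also have "sum ?f B = fact m * record_pgf (card C) z * (of_nat (card B) * record_pgf (card B) z)"
    using Suc.prems by (intro strict_total_order.sum_pow_records_Cons[OF R1 fin(1)]) (simp_all add: IH mult_ac)
  also have "sum ?f C = (\<Sum>x\<in>C. \<Sum>\<sigma>\<in>permutations_of_set (A - {x}).
      z ^ (records R2 C (x # \<sigma>) + records R1 B (x # \<sigma>)))"
    by (simp only: add.commute)
  also have "\<dots> = fact m * record_pgf (card B) z * (of_nat (card C) * record_pgf (card C) z)"
    using Suc.prems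
    by (intro strict_total_order.sum_pow_records_Cons[OF R2 fin(2)])
      (auto simp: IH[of _ B] add.commute Int_commute mult_ac)
  also have "sum ?f (A - (B \<union> C)) = of_nat (card A - card B - card C) * ?K"
    using Suc.prems fin IH by (simp add: card_Diff_subset card_Un_disjoint subset_Diff_insert)
  finally show ?case
    using card_BC unfolding Suc.hyps(2)[symmetric]
    by (simp add: of_nat_diff fact_Suc algebra_simps del: of_nat_Suc)
qed

section \<open>Poisson approximation of characteristic functions\<close>

lemma norm_iexp_diff_le: "norm (iexp x - iexp y) \<le> \<bar>x - y\<bar>"
proof -
  have "iexp x - iexp y = iexp y * (iexp (x - y) - 1)"
    by (simp add: algebra_simps flip: exp_add)
  then have "norm (iexp x - iexp y) = norm (iexp (x - y) - 1)"
    by (simp add: norm_mult)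
  also have "\<dots> \<le> \<bar>x - y\<bar>"
    using iexp_approx1[of "x - y" 0] by simp
  finally show ?thesis .
qed

lemma norm_sum_iexp_diff_le:
  assumes "\<And>p. p \<in> P \<Longrightarrow> X p \<le> Y p"
  shows "norm ((\<Sum>p\<in>P. iexp (s * X p)) - (\<Sum>p\<in>P. iexp (s * Y p)))
           \<le> \<bar>s\<bar> * ((\<Sum>p\<in>P. Y p) - (\<Sum>p\<in>P. X p))"
proof -
  have "norm ((\<Sum>p\<in>P. iexp (s * X p)) - (\<Sum>p\<in>P. iexp (s * Y p)))
      \<le> (\<Sum>p\<in>P. norm (iexp (s * X p) - iexp (s * Y p)))"
    by (simp add: norm_sum flip: sum_subtractf)
  also have "\<dots> \<le> (\<Sum>p\<in>P. \<bar>s\<bar> * (Y p - X p))"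
  proof (rule sum_mono)
    fix p assume "p \<in> P"
    have "norm (iexp (s * X p) - iexp (s * Y p)) \<le> \<bar>s * X p - s * Y p\<bar>"
      by (rule norm_iexp_diff_le)
    also have "\<dots> = \<bar>s\<bar> * (Y p - X p)"
      using assms[OF \<open>p \<in> P\<close>] by (simp add: abs_mult flip: right_diff_distrib)
    finally show "norm (iexp (s * X p) - iexp (s * Y p)) \<le> \<bar>s\<bar> * (Y p - X p)" .
  qed
  finally show ?thesis
    by (simp add: sum_distrib_left sum_subtractf right_diff_distrib)
qed

lemma norm_record_pgf_factor_le:
  fixes z :: complex
  assumes "norm z \<le> 1"
  shows "norm (1 + (z - 1) / of_nat (Suc k)) \<le> 1"
proof -
  define p where "p = inverse (real (Suc k))"
  have p: "0 \<le> p" "p \<le> 1"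
    by (auto simp: p_def inverse_le_1_iff)
  have "1 + (z - 1) / of_nat (Suc k) = of_real (1 - p) + of_real p * z"
    by (simp add: p_def field_simps of_real_inverse del: of_nat_Suc)
  also have "norm \<dots> \<le> norm (of_real (1 - p) :: complex) + norm (of_real p * z)"
    by (rule norm_triangle_ineq)
  also have "\<dots> \<le> (1 - p) + p * 1"
    using p assms by (simp add: norm_mult mult_left_le del: of_real_diff)
  finally show ?thesis by simp
qed

lemma norm_record_pgf_le:
  fixes z :: complex
  shows "norm z \<le> 1 \<Longrightarrow> norm (record_pgf m z) \<le> 1"
  unfolding record_pgf_def prod_norm[symmetric]
  by (intro prod_le_1 conjI norm_ge_zero norm_record_pgf_factor_le)

lemma sum_inverse_Suc_squared_le: "(\<Sum>k<m. 1 / (real k + 1)^2) \<le> 2 - 2 / (real m + 1)"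
proof (induction m)
  case (Suc m)
  have "0 \<le> real m * real m"
    by simp
  then have "1 / (real m + 1)^2 \<le> 2 / ((real m + 1) * (real m + 2))"
    by (simp add: divide_simps power2_eq_square algebra_simps)
  also have "\<dots> = 2 / (real m + 1) - 2 / (real m + 2)"
    by (simp add: field_simps)
  finally show ?case
    using Suc by (simp add: algebra_simps)
qed simp

lemma record_pgf_poisson_approx:
  fixes z :: complex
  assumes "norm z = 1"
  shows "norm (record_pgf m z - exp ((z - 1) * harm m)) \<le> 2 * exp (norm (z - 1)) * norm (z - 1)^2"
proof -
  define w where "w = z - 1"
  have "Re w \<le> 0"
    using assms complex_Re_le_cmod[of z] by (simp add: w_def)
  have exp_harm: "exp (w * harm m) = (\<Prod>k<m. exp (w / of_nat (Suc k)))"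
    by (simp add: harm_altdef sum_distrib_left exp_sum divide_inverse)
  have "norm (record_pgf m z - exp (w * harm m))
      \<le> (\<Sum>k<m. norm (1 + w / of_nat (Suc k) - exp (w / of_nat (Suc k))))"
    unfolding exp_harm record_pgf_def w_def[symmetric]
  proof (rule norm_prod_diff)
    show "norm (1 + w / of_nat (Suc k)) \<le> 1" for k
      using norm_record_pgf_factor_le[of z k] assms by (simp add: w_def)
    show "norm (exp (w / of_nat (Suc k))) \<le> 1" for k
      using \<open>Re w \<le> 0\<close> by (simp add: Re_divide_of_nat divide_nonpos_pos)
  qed
  also have "\<dots> \<le> (\<Sum>k<m. exp (norm w) * norm w ^ 2 * (1 / (real k + 1)^2))"
  proof (rule sum_mono)
    fix k
    let ?u = "w / of_nat (Suc k)"
    have u: "norm ?u = norm w / (real k + 1)"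
      by (simp only: norm_divide norm_of_nat) simp
    have "norm (1 + ?u - exp ?u) \<le> exp (norm ?u) * norm ?u ^ 2"
      using Taylor_exp_field[of ?u 1] by (simp add: norm_minus_commute power2_eq_square algebra_simps)
    also have "\<dots> \<le> exp (norm w) * norm w ^ 2 * (1 / (real k + 1)^2)"
    proof -
      have "norm w / (real k + 1) \<le> norm w"
        by (simp add: divide_le_eq mult_le_cancel_left1)
      then show ?thesis
        unfolding u by (simp add: power_divide divide_right_mono mult_right_mono)
    qed
    finally show "norm (1 + ?u - exp ?u) \<le> exp (norm w) * norm w ^ 2 * (1 / (real k + 1)^2)" .
  qed
  also have "\<dots> = exp (norm w) * norm w ^ 2 * (\<Sum>k<m. 1 / (real k + 1)^2)"
    by (simp add: sum_distrib_left)
  also have "\<dots> \<le> exp (norm w) * norm w ^ 2 * 2"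
    using sum_inverse_Suc_squared_le[of m] by (intro mult_left_mono) (auto intro: order_trans)
  finally show ?thesis by (simp add: w_def)
qed

text \<open>\<^term>\<open>exp (poisson_char_exponent \<nu> \<mu> s)\<close> is the characteristic function at
  \<^term>\<open>s\<close> of \<open>Y - \<mu>\<close> for a Poisson variable \<open>Y\<close> with mean \<^term>\<open>\<nu>\<close>.\<close>

definition poisson_char_exponent :: "real \<Rightarrow> real \<Rightarrow> real \<Rightarrow> complex" where
  "poisson_char_exponent \<nu> \<mu> s = - \<i> * of_real (s * \<mu>) + (iexp s - 1) * of_real \<nu>"

lemma norm_poisson_char_exponent_le:
  assumes "0 \<le> \<mu>" "\<mu> \<le> \<nu>" "\<nu> \<le> \<mu> + 2"
  shows "norm (poisson_char_exponent \<nu> \<mu> s + of_real (s^2 * \<mu> / 2))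
           \<le> 2 * \<bar>s\<bar> + s^2 + (\<mu> + 2) * \<bar>s\<bar>^3 / 6"
proof -
  define r where "r = iexp s - (1 + \<i> * of_real s - of_real (s^2 / 2))"
  define \<delta> where "\<delta> = \<nu> - \<mu>"
  have "(\<Sum>k\<le>2. (\<i> * of_real s) ^ k / fact k) = 1 + \<i> * of_real s - of_real (s^2 / 2)"
    by (simp add: numeral_2_eq_2 power_mult_distrib)
  then have r_le: "norm r \<le> \<bar>s\<bar>^3 / 6"
    using iexp_approx1[of s 2] unfolding r_def by (simp add: numeral_3_eq_3)
  have "poisson_char_exponent \<nu> \<mu> s + of_real (s^2 * \<mu> / 2)
      = \<i> * of_real (s * \<delta>) - of_real (\<delta> * s^2 / 2) + of_real \<nu> * r"
    unfolding poisson_char_exponent_def r_def \<delta>_def by (simp add: field_simps)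
  also have "norm \<dots> \<le> norm (\<i> * of_real (s * \<delta>)) + norm (of_real (\<delta> * s^2 / 2) :: complex)
      + norm (of_real \<nu> * r)"
    by (rule order_trans[OF norm_triangle_ineq add_right_mono[OF norm_triangle_ineq4]])
  also have "\<dots> = \<bar>s\<bar> * \<delta> + \<delta> * s^2 / 2 + \<nu> * norm r"
    using assms by (simp add: \<delta>_def norm_mult norm_power abs_mult del: of_real_diff)
  also have "\<dots> \<le> \<bar>s\<bar> * 2 + 2 * s^2 / 2 + (\<mu> + 2) * (\<bar>s\<bar>^3 / 6)"
    using assms r_le unfolding \<delta>_def
    by (intro add_mono mult_mono divide_right_mono mult_left_mono) auto
  finally show ?thesis by simp
qed

lemma tendsto_poisson_char_exponent:
  fixes \<nu> \<mu> :: "nat \<Rightarrow> real"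
  assumes \<mu>: "filterlim \<mu> at_top sequentially"
    and \<nu>: "eventually (\<lambda>n. \<mu> n \<le> \<nu> n \<and> \<nu> n \<le> \<mu> n + 2) sequentially"
  shows "(\<lambda>n. poisson_char_exponent (\<nu> n) (\<mu> n) (t / sqrt (\<mu> n))) \<longlonglongrightarrow> of_real (- (t^2 / 2))"
proof -
  define g where "g x = 2 * (\<bar>t\<bar> / sqrt x) + t^2 / x + (x + 2) * \<bar>t\<bar>^3 / (6 * (x * sqrt x))"
    for x :: real
  have "(g \<longlongrightarrow> 0) at_top"
    unfolding g_def by real_asymp
  then have "((\<lambda>n. g (\<mu> n)) \<longlongrightarrow> 0) sequentially"
    using \<mu> by (rule filterlim_compose)
  moreover have "eventually (\<lambda>n. norm (poisson_char_exponent (\<nu> n) (\<mu> n) (t / sqrt (\<mu> n))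
      - of_real (- (t^2 / 2))) \<le> g (\<mu> n)) sequentially"
    using \<nu> \<mu>[unfolded filterlim_at_top_dense, rule_format, of 0]
  proof eventually_elim
    case (elim n)
    let ?s = "t / sqrt (\<mu> n)"
    have "?s^2 * \<mu> n = t^2" "sqrt (\<mu> n) ^ 3 = \<mu> n * sqrt (\<mu> n)"
      using elim by (simp_all add: power_divide power3_eq_cube)
    then show ?case
      using norm_poisson_char_exponent_le[of "\<mu> n" "\<nu> n" ?s] elim
      by (simp add: g_def abs_divide power_divide power_abs mult_ac)
  qed
  ultimately have "((\<lambda>n. poisson_char_exponent (\<nu> n) (\<mu> n) (t / sqrt (\<mu> n)) - of_real (- (t^2 / 2)))
      \<longlongrightarrow> 0) sequentially"
    by (rule Lim_null_comparison[rotated])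
  then show ?thesis
    by (rule LIM_zero_cancel)
qed

lemma record_pgf_mult_poisson_approx:
  fixes z :: complex
  assumes "norm z = 1"
  shows "norm (record_pgf a z * record_pgf b z - exp ((z - 1) * (harm a + harm b)))
           \<le> 4 * exp (norm (z - 1)) * norm (z - 1)^2"
proof -
  let ?ea = "exp ((z - 1) * harm a)" and ?eb = "exp ((z - 1) * harm b)"
  have "?ea = exp ((z - 1) * of_real (harm a))"
    by (simp add: of_real_harm)
  then have "norm ?ea \<le> 1"
    using assms complex_Re_le_cmod[of z] by (simp add: harm_nonneg mult_nonpos_nonneg)
  have "record_pgf a z * record_pgf b z - ?ea * ?eb
      = (record_pgf a z - ?ea) * record_pgf b z + ?ea * (record_pgf b z - ?eb)"
    by (simp add: algebra_simps)
  also have "norm \<dots> \<le> norm (record_pgf a z - ?ea) * norm (record_pgf b z) + norm ?ea * norm (record_pgf b z - ?eb)"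
    by (metis norm_mult norm_triangle_ineq)
  also have "\<dots> \<le> norm (record_pgf a z - ?ea) * 1 + 1 * norm (record_pgf b z - ?eb)"
    by (rule add_mono[OF mult_left_mono mult_right_mono])
      (use norm_record_pgf_le[of z b] assms \<open>norm ?ea \<le> 1\<close> in auto)
  also have "\<dots> \<le> 4 * exp (norm (z - 1)) * norm (z - 1)^2"
    using record_pgf_poisson_approx[OF assms, of a] record_pgf_poisson_approx[OF assms, of b] by simp
  finally show ?thesis
    by (simp add: distrib_left exp_add)
qed

lemma record_pgf_mult_iexp_poisson_approx:
  "norm (record_pgf a (iexp s) * record_pgf b (iexp s) - exp ((iexp s - 1) * (harm a + harm b)))
     \<le> 4 * exp \<bar>s\<bar> * s^2"
proof -
  have "norm (iexp s - 1) \<le> \<bar>s\<bar>"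
    using iexp_approx1[of s 0] by simp
  then have "norm (iexp s - 1)^2 \<le> \<bar>s\<bar>^2"
    by (intro power_mono) auto
  with \<open>norm (iexp s - 1) \<le> \<bar>s\<bar>\<close>
  have "4 * exp (norm (iexp s - 1)) * norm (iexp s - 1)^2 \<le> 4 * exp \<bar>s\<bar> * s^2"
    by (intro mult_mono mult_left_mono) auto
  with record_pgf_mult_poisson_approx[of "iexp s" a b] show ?thesis
    by simp
qed

section \<open>The depth of a key in a random binary search tree\<close>

lemma real_distribution_distr_measure_pmf: "real_distribution (distr (measure_pmf p) borel f)"
  unfolding real_distribution_def real_distribution_axioms_def
  by (auto intro!: measure_pmf.prob_space_distr)

lemma char_distr_rand_perm:
  "char (distr (measure_pmf (rand_perm n)) borel f) t
     = (\<Sum>\<pi>\<in>permutations_of_set {1..n}. iexp (t * f \<pi>)) / fact n"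
proof -
  let ?P = "permutations_of_set {1..n}"
  have "(\<lambda>x. iexp (t * x)) \<in> borel_measurable borel"
    by (intro borel_measurable_continuous_onI continuous_intros)
  then have "char (distr (measure_pmf (rand_perm n)) borel f) t
      = measure_pmf.expectation (pmf_of_set ?P) (\<lambda>\<pi>. iexp (t * f \<pi>))"
    unfolding char_def rand_perm_def by (subst integral_distr) auto
  also have "\<dots> = (\<Sum>\<pi>\<in>?P. pmf (pmf_of_set ?P) \<pi> *\<^sub>R iexp (t * f \<pi>))"
    by (rule integral_measure_pmf) auto
  also have "\<dots> = (\<Sum>\<pi>\<in>?P. iexp (t * f \<pi>)) / fact n"
    by (simp add: scaleR_conv_of_real sum_divide_distrib)
  finally show ?thesis .
qed

lemma E_depth_eq_sum:
  "E_depth n L = (\<Sum>\<pi>\<in>permutations_of_set {1..n}. X_depth L \<pi>) / fact n"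
  unfolding E_depth_def rand_perm_def by (subst integral_pmf_of_set) auto

lemma X_depth_eq_records:
  assumes "\<pi> \<in> permutations_of_set {1..n}" "L \<in> {1..n}"
  shows "X_depth L \<pi> = real (records (<) {..L} \<pi>) + real (records (>) {L..} \<pi>) - 2"
  using bst_depth_eq_records[of L \<pi>] assms
  unfolding X_depth_def by (simp add: permutations_of_setD)

lemma E_depth_eq:
  assumes "L \<in> {1..n}"
  shows "E_depth n L = harm L + harm (Suc n - L) - 2"
proof -
  let ?P = "permutations_of_set {1..n}"
  have "{..L} \<inter> {1..n} = {1..L}" "{L..} \<inter> {1..n} = {L..n}"
    using assms by auto
  then have "(\<Sum>\<pi>\<in>?P. X_depth L \<pi>)
      = (\<Sum>\<pi>\<in>?P. real (records (<) {..L} \<pi>)) + (\<Sum>\<pi>\<in>?P. real (records (>) {L..} \<pi>)) - 2 * fact n"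
    using X_depth_eq_records[OF _ assms] by (simp add: sum_subtractf sum.distrib)
  also have "\<dots> = fact n * (harm L + harm (Suc n - L) - 2)"
    using assms by (simp add: strict_total_order.sum_records[OF strict_total_order_less]
      strict_total_order.sum_records[OF strict_total_order_greater] algebra_simps)
  finally show ?thesis
    by (simp add: E_depth_eq_sum)
qed

lemma E_depth_bounds:
  assumes "L \<in> {1..n}"
  shows "E_depth n L \<le> harm (L - 1) + harm (n - L)" "harm (L - 1) + harm (n - L) \<le> E_depth n L + 2"
proof -
  have "harm L = harm (L - 1) + inverse (real L)"
    using assms harm_Suc[of "L - 1"] by simp
  moreover have "harm (Suc n - L) = harm (n - L) + inverse (real (Suc n - L))"
    using assms harm_Suc[of "n - L"] by (simp add: Suc_diff_le)
  moreover have "inverse (real L) \<le> 1" "inverse (real (Suc n - L)) \<le> 1"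
    using assms by (auto simp: inverse_le_1_iff)
  ultimately show "E_depth n L \<le> harm (L - 1) + harm (n - L)" "harm (L - 1) + harm (n - L) \<le> E_depth n L + 2"
    using assms by (simp_all add: E_depth_eq)
qed

lemma ln_le_E_depth:
  assumes "L \<in> {1..n}"
  shows "ln (real n) - 2 \<le> E_depth n L"
proof -
  have "real L * real L \<le> real L * real n" "real (Suc n - L) = real n + 1 - real L"
    using assms by (auto intro: mult_left_mono simp: of_nat_diff)
  then have "real n \<le> (real L + 1) * (real (Suc n - L) + 1)"
    by (simp add: algebra_simps del: mult_le_cancel_left_pos of_nat_le_iff of_nat_mult)
  then have "ln (real n) \<le> ln ((real L + 1) * (real (Suc n - L) + 1))"
    using assms by (intro ln_mono) auto
  also have "\<dots> = ln (real L + 1) + ln (real (Suc n - L) + 1)"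
    by (rule ln_mult_pos) auto
  also have "\<dots> \<le> harm L + harm (Suc n - L)"
    by (intro add_mono ln_le_harm)
  finally show ?thesis
    using assms by (simp add: E_depth_eq)
qed

lemma X_depth_le_records:
  assumes "\<pi> \<in> permutations_of_set {1..n}" "L \<in> {1..n}"
  shows "X_depth L \<pi> \<le> real (records (<) {1..<L} \<pi> + records (>) {L<..n} \<pi>)"
proof -
  have set_\<pi>: "set \<pi> = {1..n}"
    using assms(1) by (simp add: permutations_of_setD)
  have "records (<) {..L} \<pi> = records (<) (insert L {1..<L}) \<pi>"
    using assms(2) by (intro records_cong) (auto simp: set_\<pi>)
  also have "\<dots> \<le> Suc (records (<) {1..<L} \<pi>)"
    by (intro strict_total_order.records_insert_max_le[OF strict_total_order_less]) auto
  finally have "records (<) {..L} \<pi> \<le> Suc (records (<) {1..<L} \<pi>)" .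
  moreover have "records (>) {L..} \<pi> = records (>) (insert L {L<..n}) \<pi>"
    using assms(2) by (intro records_cong) (auto simp: set_\<pi>)
  moreover have "\<dots> \<le> Suc (records (>) {L<..n} \<pi>)"
    by (intro strict_total_order.records_insert_max_le[OF strict_total_order_greater]) auto
  ultimately show ?thesis
    using X_depth_eq_records[OF assms] by simp
qed

lemma sum_records_below_above:
  assumes "L \<in> {1..n}"
  shows "(\<Sum>\<pi>\<in>permutations_of_set {1..n}. real (records (<) {1..<L} \<pi> + records (>) {L<..n} \<pi>))
           = fact n * (harm (L - 1) + harm (n - L))"
proof -
  have "{1..<L} \<inter> {1..n} = {1..<L}" "{L<..n} \<inter> {1..n} = {L<..n}"
    using assms by auto
  then show ?thesis
    by (simp add: sum.distrib distrib_left strict_total_order.sum_records[OF strict_total_order_less]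
        strict_total_order.sum_records[OF strict_total_order_greater])
qed

lemma norm_sum_iexp_depth_minus_records_le:
  assumes L: "L \<in> {1..n}"
  shows "norm ((\<Sum>\<pi>\<in>permutations_of_set {1..n}. iexp (s * X_depth L \<pi>))
           - (\<Sum>\<pi>\<in>permutations_of_set {1..n}. iexp (s * real (records (<) {1..<L} \<pi> + records (>) {L<..n} \<pi>))))
         \<le> fact n * (2 * \<bar>s\<bar>)"
    (is "norm (?X - ?S) \<le> _")
proof -
  let ?P = "permutations_of_set {1..n}"
  have "norm (?X - ?S) \<le> \<bar>s\<bar> * ((\<Sum>\<pi>\<in>?P. real (records (<) {1..<L} \<pi> + records (>) {L<..n} \<pi>))
      - (\<Sum>\<pi>\<in>?P. X_depth L \<pi>))"
    using X_depth_le_records[OF _ L] by (intro norm_sum_iexp_diff_le)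
  also have "\<dots> = fact n * (\<bar>s\<bar> * (harm (L - 1) + harm (n - L) - E_depth n L))"
    unfolding sum_records_below_above[OF L] by (simp add: E_depth_eq_sum algebra_simps)
  also have "\<dots> \<le> fact n * (2 * \<bar>s\<bar>)"
    using E_depth_bounds(2)[OF L] mult_left_mono[of "harm (L - 1) + harm (n - L) - E_depth n L" 2 "\<bar>s\<bar>"]
    by (simp add: mult.commute)
  finally show ?thesis .
qed

lemma sum_pow_records_below_above:
  fixes z :: "'a :: field_char_0"
  assumes "L \<in> {1..n}"
  shows "(\<Sum>\<pi>\<in>permutations_of_set {1..n}. z ^ (records (<) {1..<L} \<pi> + records (>) {L<..n} \<pi>))
           = fact n * record_pgf (L - 1) z * record_pgf (n - L) z"
  using assms
  by (subst sum_pow_records[OF strict_total_order_less strict_total_order_greater]) auto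

lemma char_depth_approx:
  fixes t :: real
  assumes L: "L \<in> {1..n}" and pos: "E_depth n L > 0"
  defines "\<mu> \<equiv> E_depth n L"
  defines "s \<equiv> t / sqrt \<mu>"
  shows "norm (char (distr (measure_pmf (rand_perm n)) borel (\<lambda>\<pi>. (X_depth L \<pi> - \<mu>) / sqrt \<mu>)) t
           - exp (poisson_char_exponent (harm (L - 1) + harm (n - L)) \<mu> s))
         \<le> 2 * \<bar>s\<bar> + 4 * exp \<bar>s\<bar> * s^2"
proof -
  let ?P = "permutations_of_set {1..n}"
  define S where "S \<pi> = records (<) {1..<L} \<pi> + records (>) {L<..n} \<pi>" for \<pi>
  define H :: real where "H = harm (L - 1) + harm (n - L)"
  let ?z = "iexp s"
  let ?rot = "iexp (- (s * \<mu>))"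
  have "t * ((X_depth L \<pi> - \<mu>) / sqrt \<mu>) = s * X_depth L \<pi> - s * \<mu>" for \<pi>
    using pos by (simp add: s_def \<mu>_def field_simps)
  moreover have "iexp (s * X_depth L \<pi> - s * \<mu>) = ?rot * iexp (s * X_depth L \<pi>)" for \<pi>
    by (simp add: algebra_simps flip: exp_add)
  ultimately have char_eq:
    "char (distr (measure_pmf (rand_perm n)) borel (\<lambda>\<pi>. (X_depth L \<pi> - \<mu>) / sqrt \<mu>)) t
      = ?rot * ((\<Sum>\<pi>\<in>?P. iexp (s * X_depth L \<pi>)) / fact n)"
    by (simp only: char_distr_rand_perm sum_distrib_left times_divide_eq_right)
  have exp_eq: "exp (poisson_char_exponent H \<mu> s) = ?rot * exp ((?z - 1) * H)"
    by (simp add: poisson_char_exponent_def algebra_simps flip: exp_add)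
  have "(\<Sum>\<pi>\<in>?P. iexp (s * real (S \<pi>))) = (\<Sum>\<pi>\<in>?P. ?z ^ S \<pi>)"
    by (simp add: exp_of_nat_mult[symmetric] algebra_simps)
  also have "\<dots> = fact n * (record_pgf (L - 1) ?z * record_pgf (n - L) ?z)"
    unfolding S_def sum_pow_records_below_above[OF L] by (simp only: mult.assoc)
  finally have pgf_eq: "(\<Sum>\<pi>\<in>?P. iexp (s * real (S \<pi>))) / fact n = record_pgf (L - 1) ?z * record_pgf (n - L) ?z"
    by simp
  have coupling: "norm ((\<Sum>\<pi>\<in>?P. iexp (s * X_depth L \<pi>)) / fact n
      - (\<Sum>\<pi>\<in>?P. iexp (s * real (S \<pi>))) / fact n) \<le> 2 * \<bar>s\<bar>"
    using norm_sum_iexp_depth_minus_records_le[OF L, of s] unfolding S_def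
    by (simp add: norm_divide field_simps flip: diff_divide_distrib)
  have poisson: "norm (record_pgf (L - 1) ?z * record_pgf (n - L) ?z - exp ((?z - 1) * H)) \<le> 4 * exp \<bar>s\<bar> * s^2"
    using record_pgf_mult_iexp_poisson_approx[of "L - 1" s "n - L"] by (simp add: H_def of_real_harm)
  have "norm (char (distr (measure_pmf (rand_perm n)) borel (\<lambda>\<pi>. (X_depth L \<pi> - \<mu>) / sqrt \<mu>)) t
           - exp (poisson_char_exponent H \<mu> s))
      = norm ((\<Sum>\<pi>\<in>?P. iexp (s * X_depth L \<pi>)) / fact n - exp ((?z - 1) * H))"
    unfolding char_eq exp_eq right_diff_distrib[symmetric] norm_mult by simp
  also have "\<dots> \<le> 2 * \<bar>s\<bar> + 4 * exp \<bar>s\<bar> * s^2"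
    by (rule norm_diff_triangle_le[OF coupling[unfolded pgf_eq] poisson])
  finally show ?thesis
    by (simp add: H_def)
qed

lemma filterlim_E_depth:
  assumes "eventually (\<lambda>n. l n \<in> {1..n}) sequentially"
  shows "filterlim (\<lambda>n. E_depth n (l n)) at_top sequentially"
proof (rule filterlim_at_top_mono)
  show "filterlim (\<lambda>n::nat. ln (real n) - 2) at_top sequentially"
    by real_asymp
  show "eventually (\<lambda>n. ln (real n) - 2 \<le> E_depth n (l n)) sequentially"
    using assms by eventually_elim (rule ln_le_E_depth)
qed

lemma tendsto_char_depth_minus_poisson:
  fixes t :: real
  assumes l: "eventually (\<lambda>n. l n \<in> {1..n}) sequentially"
  defines "\<mu> \<equiv> \<lambda>n. E_depth n (l n)"
  shows "(\<lambda>n. char (distr (measure_pmf (rand_perm n)) borel (\<lambda>\<pi>. (X_depth (l n) \<pi> - \<mu> n) / sqrt (\<mu> n))) t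
           - exp (poisson_char_exponent (harm (l n - 1) + harm (n - l n)) (\<mu> n) (t / sqrt (\<mu> n))))
         \<longlonglongrightarrow> 0"
proof -
  define s where "s n = t / sqrt (\<mu> n)" for n
  have \<mu>: "filterlim \<mu> at_top sequentially"
    unfolding \<mu>_def using l by (rule filterlim_E_depth)
  have "((\<lambda>x. t / sqrt x) \<longlongrightarrow> 0) at_top"
    by real_asymp
  then have "s \<longlonglongrightarrow> 0"
    unfolding s_def using \<mu> by (rule filterlim_compose)
  then have "(\<lambda>n. 2 * \<bar>s n\<bar> + 4 * exp \<bar>s n\<bar> * (s n)^2) \<longlonglongrightarrow> 0"
    by (auto intro!: tendsto_eq_intros)
  moreover have "eventually (\<lambda>n. norm (char (distr (measure_pmf (rand_perm n)) borel
        (\<lambda>\<pi>. (X_depth (l n) \<pi> - \<mu> n) / sqrt (\<mu> n))) t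
        - exp (poisson_char_exponent (harm (l n - 1) + harm (n - l n)) (\<mu> n) (s n)))
      \<le> 2 * \<bar>s n\<bar> + 4 * exp \<bar>s n\<bar> * (s n)^2) sequentially"
    using l \<mu>[unfolded filterlim_at_top_dense, rule_format, of 0]
    by eventually_elim (unfold \<mu>_def s_def, rule char_depth_approx)
  ultimately show ?thesis
    unfolding s_def by (rule Lim_null_comparison[rotated])
qed

theorem mainTheorem4:
  fixes l :: "nat \<Rightarrow> nat"
  assumes "\<And>n. n \<ge> 1 \<Longrightarrow> 1 \<le> l n \<and> l n \<le> n"
  shows "weak_conv_m
           (\<lambda>n. distr (measure_pmf (rand_perm n)) borel
                   (\<lambda>\<pi>. (X_depth (l n) \<pi> - E_depth n (l n)) / sqrt (E_depth n (l n))))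
           std_normal_distribution"
proof (rule levy_continuity[OF real_distribution_distr_measure_pmf real_dist_normal_dist])
  fix t :: real
  define \<mu> where "\<mu> n = E_depth n (l n)" for n
  define H :: "nat \<Rightarrow> real" where "H n = harm (l n - 1) + harm (n - l n)" for n
  have l: "eventually (\<lambda>n. l n \<in> {1..n}) sequentially"
    using eventually_ge_at_top[of 1] by eventually_elim (use assms in auto)
  have "eventually (\<lambda>n. \<mu> n \<le> H n \<and> H n \<le> \<mu> n + 2) sequentially"
    using l by eventually_elim (unfold \<mu>_def H_def, intro conjI E_depth_bounds)
  with filterlim_E_depth[OF l] have "(\<lambda>n. exp (poisson_char_exponent (H n) (\<mu> n) (t / sqrt (\<mu> n))))
      \<longlonglongrightarrow> exp (of_real (- (t^2 / 2)))"
    unfolding \<mu>_def by (intro tendsto_exp tendsto_poisson_char_exponent)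
  also have "exp (of_real (- (t^2 / 2))) = char std_normal_distribution t"
    by (simp only: char_std_normal_distribution exp_of_real minus_divide_left)
  finally show "(\<lambda>n. char (distr (measure_pmf (rand_perm n)) borel
      (\<lambda>\<pi>. (X_depth (l n) \<pi> - E_depth n (l n)) / sqrt (E_depth n (l n)))) t) \<longlonglongrightarrow> char std_normal_distribution t"
    using tendsto_char_depth_minus_poisson[OF l, of t] unfolding \<mu>_def H_def by (auto dest: Lim_transform)
qed

end
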